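(* Let $N\ge 2$ and consider the slotted-ALOHA game among $N$ players in which player $i$ chooses $q_i\in(0,1)$ and has net utility $$V_i(\underline{q})=C\log\gamma_i(\underline{q})+A\,\alpha_i(\underline{q}_{-i})\,\overline{\gamma}_{-i}(\underline{q})-M q_i,$$ where $\gamma_i(\underline{q})=q_i\prod_{j\ne i}(1-q_j)$, $\alpha_i(\underline{q}_{-i})=\prod_{j\ne i}(1-q_j)$, $\overline{\gamma}_{-i}(\underline{q})=\frac{1}{N-1}\sum_{j\ne i}\gamma_j(\underline{q})$, and all players have the same parameters $C,M>0$, $A\ge 0$. Let $q^*\underline{1}$, $0<q^*<1$, be a symmetric Nash equilibrium of this game. If $$C>2(N-1)A,$$ then $q^*\underline{1}$ is a locally asymptotically stable equilibrium of the continuous-time dynamics $$\dot q_i(t)=\frac{\partial V_i}{\partial q_i}(\underline{q}(t)),\qquad i=1,\dots,N.$$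
   Context: $\underline{q}=(q_1,\dots,q_N)$ is the profile of access probabilities and $\underline{q}_{-i}$ the profile of players other than $i$; $\underline{1}$ is the all-ones vector in $\mathbb{R}^N$. A Nash equilibrium is a profile $\underline{q}^*$ such that for each $i$, $q_i^*$ maximizes $V_i(q_i;\underline{q}^*_{-i})$ over $q_i$; it is symmetric if all coordinates are equal. *)

theory Defs
  imports "HOL-Analysis.Analysis"
begin

text \<open>Players are indexed by a finite type 'n, N = CARD('n). A profile is q :: real^'n.\<close>

definition upd :: "real^'n \<Rightarrow> 'n \<Rightarrow> real \<Rightarrow> real^'n" where
  "upd q i x = (\<chi> j. if j = i then x else q $ j)"

definition alpha :: "real^'n \<Rightarrow> 'n \<Rightarrow> real" where
  "alpha q i = (\<Prod>j\<in>UNIV - {i}. 1 - q $ j)"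

definition gamma :: "real^'n \<Rightarrow> 'n \<Rightarrow> real" where
  "gamma q i = q $ i * (\<Prod>j\<in>UNIV - {i}. 1 - q $ j)"

definition gamma_bar :: "real^'n \<Rightarrow> 'n \<Rightarrow> real" where
  "gamma_bar q i = (1 / (real CARD('n) - 1)) * (\<Sum>j\<in>UNIV - {i}. gamma q j)"

definition V :: "real \<Rightarrow> real \<Rightarrow> real \<Rightarrow> real^'n \<Rightarrow> 'n \<Rightarrow> real" where
  "V C A M q i = C * ln (gamma q i) + A * alpha q i * gamma_bar q i - M * q $ i"

definition nash :: "real \<Rightarrow> real \<Rightarrow> real \<Rightarrow> real^'n \<Rightarrow> bool" where
  "nash C A M q \<longleftrightarrow> (\<forall>i. 0 < q $ i \<and> q $ i < 1) \<and>
     (\<forall>i x. 0 < x \<and> x < 1 \<longrightarrow> V C A M (upd q i x) i \<le> V C A M q i)"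

definition field :: "real \<Rightarrow> real \<Rightarrow> real \<Rightarrow> real^'n \<Rightarrow> real^'n" where
  "field C A M q = (\<chi> i. deriv (\<lambda>x. V C A M (upd q i x) i) (q $ i))"

definition is_solution :: "(real^'n \<Rightarrow> real^'n) \<Rightarrow> (real \<Rightarrow> real^'n) \<Rightarrow> bool" where
  "is_solution F x \<longleftrightarrow> (\<forall>t\<ge>0. (x has_vector_derivative F (x t)) (at t within {0..}))"

definition loc_asym_stable :: "(real^'n \<Rightarrow> real^'n) \<Rightarrow> real^'n \<Rightarrow> bool" where
  "loc_asym_stable F p \<longleftrightarrow> F p = 0 \<and>
     (\<forall>\<epsilon>>0. \<exists>\<delta>>0. \<forall>x. is_solution F x \<and> dist (x 0) p < \<delta> \<longrightarrow> (\<forall>t\<ge>0. dist (x t) p < \<epsilon>)) \<and>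
     (\<exists>\<delta>>0. (\<forall>y. dist y p < \<delta> \<longrightarrow> (\<exists>x. is_solution F x \<and> x 0 = y)) \<and>
        (\<forall>x. is_solution F x \<and> dist (x 0) p < \<delta> \<longrightarrow> (x \<longlongrightarrow> p) at_top))"

end

theory Submission
  imports Defs
begin

text \<open>At an interior Nash equilibrium p the vector field vanishes. Its i-th component is
  C/q_i - A/(N-1) * alpha_i(q) * gamma_rest_i(q) - M, where gamma_rest_i carries the throughput of
  the other players. The term C/q_i decreases with slope at most -C on (0,1], while
  alpha_i * gamma_rest_i changes by at most 2(N-1) times the l1-distance of the other coordinates.
  Summing over i and using \<Sum>i |u_i| \<Sum>k\<noteq>i |u_k| \<le> (N-1) |u|^2 gives
  (q - p) \<bullet> F q \<le> -(C - 2(N-1)A) |q - p|^2 near p, so for C > 2(N-1)A the distance to p decays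
  exponentially along every solution starting near p. Solutions exist because near p the field
  agrees with a globally Lipschitz one (evaluate it at the coordinatewise clamp to a cube inside
  (0,1)^N), for which Picard iteration converges.\<close>

lemma prod_diff_abs_le:
  fixes a b :: "'i \<Rightarrow> real"
  assumes "finite S" and "\<And>k. k \<in> S \<Longrightarrow> 0 \<le> a k \<and> a k \<le> 1 \<and> 0 \<le> b k \<and> b k \<le> 1"
  shows "\<bar>prod a S - prod b S\<bar> \<le> (\<Sum>k\<in>S. \<bar>a k - b k\<bar>)"
  using assms
proof (induction S rule: finite_induct)
  case empty
  then show ?case by simp
next
  case (insert x F)
  have ab: "0 \<le> a k \<and> a k \<le> 1 \<and> 0 \<le> b k \<and> b k \<le> 1" if "k \<in> insert x F" for k
    using insert.prems that by blast
  have IH: "\<bar>prod a F - prod b F\<bar> \<le> (\<Sum>k\<in>F. \<bar>a k - b k\<bar>)"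
    using insert.IH ab by blast
  have aF: "0 \<le> prod a F" "prod a F \<le> 1"
    using ab by (auto intro: prod_nonneg prod_le_1)
  have "prod a (insert x F) - prod b (insert x F) = (a x - b x) * prod a F + b x * (prod a F - prod b F)"
    using insert.hyps by (simp add: algebra_simps)
  also have "\<bar>\<dots>\<bar> \<le> \<bar>a x - b x\<bar> * prod a F + b x * \<bar>prod a F - prod b F\<bar>"
    using aF ab[of x] by (metis abs_mult abs_of_nonneg abs_triangle_ineq insertI1)
  also have "\<dots> \<le> \<bar>a x - b x\<bar> + \<bar>prod a F - prod b F\<bar>"
    using aF ab[of x] by (intro add_mono mult_left_le mult_left_le_one_le) auto
  also have "\<dots> \<le> \<bar>a x - b x\<bar> + (\<Sum>k\<in>F. \<bar>a k - b k\<bar>)"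
    using IH by simp
  finally show ?case
    using insert.hyps by simp
qed

lemma abs_mult_diff_le:
  fixes a b a' b' :: real
  shows "\<bar>a * b - a' * b'\<bar> \<le> \<bar>a - a'\<bar> * \<bar>b\<bar> + \<bar>a'\<bar> * \<bar>b - b'\<bar>"
proof -
  have "a * b - a' * b' = (a - a') * b + a' * (b - b')"
    by (simp add: algebra_simps)
  then show ?thesis
    by (metis abs_mult abs_triangle_ineq)
qed

lemma inverse_diff_mult_le:
  fixes a b C :: real
  assumes "0 < a" "a \<le> 1" "0 < b" "b \<le> 1" "0 \<le> C"
  shows "(a - b) * (C / a - C / b) \<le> - C * (a - b)\<^sup>2"
proof -
  have ab: "0 < a * b" "a * b \<le> 1"
    using assms by (auto simp: mult_le_one)
  have "(a - b) * (C / a - C / b) = - C * ((a - b)\<^sup>2 / (a * b))"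
    using assms by (simp add: field_simps power2_eq_square)
  moreover have "(a - b)\<^sup>2 \<le> (a - b)\<^sup>2 / (a * b)"
    using ab by (simp add: le_divide_eq mult_left_le)
  ultimately show ?thesis
    using mult_left_mono[OF _ assms(5)] by (metis minus_mult_left neg_le_iff_le times_divide_eq_right)
qed

lemma inverse_diff_abs_le:
  fixes x y lo C :: real
  assumes "0 < lo" "lo \<le> x" "lo \<le> y"
  shows "\<bar>C / x - C / y\<bar> \<le> \<bar>C\<bar> / lo\<^sup>2 * \<bar>x - y\<bar>"
proof -
  have "x > 0" "y > 0"
    using assms by linarith+
  then have "C / x - C / y = C * (y - x) / (x * y)"
    by (simp add: field_simps)
  then have "\<bar>C / x - C / y\<bar> = \<bar>C\<bar> * \<bar>x - y\<bar> / (x * y)"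
    using \<open>x > 0\<close> \<open>y > 0\<close> by (simp add: abs_mult abs_minus_commute)
  also have "\<dots> \<le> \<bar>C\<bar> * \<bar>x - y\<bar> / lo\<^sup>2"
    using assms by (intro divide_left_mono) (auto simp: power2_eq_square intro: mult_mono)
  finally show ?thesis
    by simp
qed

lemma real_card_UNIV_Diff_singleton: "real (card (UNIV - {i::'n::finite})) = real CARD('n) - 1"
  by (simp add: card_Diff_singleton of_nat_diff Suc_leI)

lemma sum_abs_mult_sum_others_le:
  fixes u :: "'n::finite \<Rightarrow> real"
  shows "(\<Sum>i\<in>UNIV. \<bar>u i\<bar> * (\<Sum>k\<in>UNIV-{i}. \<bar>u k\<bar>)) \<le> (real CARD('n) - 1) * (\<Sum>i\<in>UNIV. (u i)\<^sup>2)"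
proof -
  define Q where "Q = (\<Sum>i\<in>UNIV. (u i)\<^sup>2)"
  have rest: "(\<Sum>k\<in>UNIV-{i}. (u k)\<^sup>2) = Q - (u i)\<^sup>2" for i
    unfolding Q_def by (simp add: sum.remove[of UNIV i])
  have "(\<Sum>i\<in>UNIV. \<bar>u i\<bar> * (\<Sum>k\<in>UNIV-{i}. \<bar>u k\<bar>)) = (\<Sum>i\<in>UNIV. \<Sum>k\<in>UNIV-{i}. \<bar>u i\<bar> * \<bar>u k\<bar>)"
    by (simp add: sum_distrib_left)
  also have "\<dots> \<le> (\<Sum>i\<in>UNIV. \<Sum>k\<in>UNIV-{i}. ((u i)\<^sup>2 + (u k)\<^sup>2) / 2)"
  proof (intro sum_mono)
    fix i k
    have "0 \<le> (\<bar>u i\<bar> - \<bar>u k\<bar>)\<^sup>2"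
      by simp
    then show "\<bar>u i\<bar> * \<bar>u k\<bar> \<le> ((u i)\<^sup>2 + (u k)\<^sup>2) / 2"
      by (simp add: power2_eq_square algebra_simps)
  qed
  also have "\<dots> = (\<Sum>i\<in>UNIV. ((real CARD('n) - 1) * (u i)\<^sup>2 + (Q - (u i)\<^sup>2)) / 2)"
    by (intro sum.cong refl)
      (simp add: sum_divide_distrib[symmetric] sum.distrib rest real_card_UNIV_Diff_singleton)
  also have "\<dots> = (real CARD('n) - 1) * Q"
    by (simp add: sum_divide_distrib[symmetric] sum.distrib sum_subtractf
        sum_distrib_left[symmetric] Q_def field_simps)
  finally show ?thesis
    unfolding Q_def .
qed

section \<open>Solutions of ODEs with a globally Lipschitz field\<close>

lemma has_integral_power_0:
  fixes t :: real
  assumes "0 \<le> t"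
  shows "((\<lambda>s. s ^ n) has_integral (t ^ Suc n / real (Suc n))) {0..t}"
proof -
  have "((\<lambda>s. s ^ n) has_integral (t ^ Suc n / real (Suc n) - 0 ^ Suc n / real (Suc n))) {0..t}"
  proof (rule fundamental_theorem_of_calculus[OF assms])
    fix x :: real
    have "((\<lambda>s. s ^ Suc n) has_real_derivative real (Suc n) * x ^ n) (at x within {0..t})"
      using DERIV_pow[of "Suc n" x "{0..t}"] by simp
    then have "((\<lambda>s. s ^ Suc n / real (Suc n)) has_real_derivative real (Suc n) * x ^ n / real (Suc n))
        (at x within {0..t})"
      by (rule DERIV_cdivide)
    then show "((\<lambda>s. s ^ Suc n / real (Suc n)) has_vector_derivative x ^ n) (at x within {0..t})"
      by (simp add: has_real_derivative_iff_has_vector_derivative)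
  qed
  then show ?thesis
    by simp
qed

lemma has_vector_derivative_if_integral_eq:
  fixes f x :: "real \<Rightarrow> 'a::euclidean_space"
  assumes "continuous_on {0..t+1} f" and "\<And>t. 0 \<le> t \<Longrightarrow> x t = y + integral {0..t} f" and "0 \<le> t"
  shows "(x has_vector_derivative f t) (at t within {0..})"
proof -
  have "((\<lambda>u. y + integral {0..u} f) has_vector_derivative f t) (at t within {0..t+1})"
    using assms(1,3) by (auto intro!: derivative_eq_intros integral_has_vector_derivative)
  then have "(x has_vector_derivative f t) (at t within {0..t+1})"
    by (rule has_vector_derivative_transform[rotated 2]) (use assms(2,3) in auto)
  moreover have "at t within {0..t+1} = at t within {0..}"
    by (rule at_within_nhd[of _ "{..<t+1}"]) auto
  ultimately show ?thesis
    by simp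
qed

lemma summable_picard_bound:
  fixes B L T :: real
  assumes "0 \<le> L" and "0 \<le> T" and "0 \<le> B"
  shows "summable (\<lambda>i. B * L^i * T^Suc i / fact (Suc i))"
proof (rule summable_comparison_test)
  show "summable (\<lambda>n. B * T * ((L * T) ^ n /\<^sub>R fact n))"
    by (intro summable_mult summable_exp_generic)
  have "B * L^n * T^Suc n / fact (Suc n) \<le> B * T * (L * T) ^ n / fact n" for n
  proof -
    have "B * L^n * T^Suc n / fact (Suc n) = B * T * (L * T) ^ n / fact (Suc n)"
      by (simp add: power_mult_distrib)
    also have "\<dots> \<le> B * T * (L * T) ^ n / fact n"
      using assms by (intro divide_left_mono) (auto simp: fact_mono)
    finally show ?thesis .
  qed
  then show "\<exists>N. \<forall>n\<ge>N. norm (B * L^n * T^Suc n / fact (Suc n)) \<le> B * T * ((L * T) ^ n /\<^sub>R fact n)"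
    using assms by (auto simp: divide_inverse ac_simps)
qed

primrec picard_iter :: "('a::euclidean_space \<Rightarrow> 'a) \<Rightarrow> 'a \<Rightarrow> nat \<Rightarrow> real \<Rightarrow> 'a" where
  "picard_iter H y 0 = (\<lambda>t. y)"
| "picard_iter H y (Suc k) = (\<lambda>t. y + integral {0..t} (\<lambda>s. H (picard_iter H y k s)))"

context
  fixes H :: "'a::euclidean_space \<Rightarrow> 'a" and L :: real
  assumes lipschitz_H: "L-lipschitz_on UNIV H"
begin

lemma continuous_on_lipschitz_UNIV: "continuous_on S H"
  using lipschitz_on_continuous_on[OF lipschitz_H] by (rule continuous_on_subset) simp

lemma continuous_on_picard_iter: "continuous_on {0..T} (picard_iter H y k)"
proof (induction k)
  case 0
  then show ?case
    by simp
next
  case (Suc k)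
  have "(\<lambda>s. H (picard_iter H y k s)) integrable_on {0..T}"
    by (rule integrable_continuous_interval
        [OF continuous_on_compose2[OF continuous_on_lipschitz_UNIV Suc.IH subset_UNIV]])
  then show ?case
    by (auto intro!: continuous_intros indefinite_integral_continuous_1)
qed

lemma integrable_H_picard_iter: "(\<lambda>s. H (picard_iter H y k s)) integrable_on {0..T}"
  by (rule integrable_continuous_interval
      [OF continuous_on_compose2[OF continuous_on_lipschitz_UNIV continuous_on_picard_iter subset_UNIV]])

lemma picard_iter_step_le:
  assumes "0 \<le> t"
  shows "norm (picard_iter H y (Suc k) t - picard_iter H y k t)
           \<le> norm (H y) * L^k * t^Suc k / fact (Suc k)"
  using assms
proof (induction k arbitrary: t)
  case 0
  then show ?case
    by (simp add: integral_const_real)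
next
  case (Suc k)
  define c where "c = L * norm (H y) * L^k / fact (Suc k)"
  have integrand_le: "norm (H (picard_iter H y (Suc k) s) - H (picard_iter H y k s)) \<le> c * s ^ Suc k"
    if "s \<in> {0..t}" for s
  proof -
    have "norm (H (picard_iter H y (Suc k) s) - H (picard_iter H y k s))
        \<le> L * norm (picard_iter H y (Suc k) s - picard_iter H y k s)"
      using lipschitz_on_normD[OF lipschitz_H] by simp
    also have "\<dots> \<le> L * (norm (H y) * L^k * s^Suc k / fact (Suc k))"
      using Suc.IH[of s] that lipschitz_on_nonneg[OF lipschitz_H] by (intro mult_left_mono) auto
    finally show ?thesis
      unfolding c_def by simp
  qed
  have "picard_iter H y (Suc (Suc k)) t - picard_iter H y (Suc k) t
      = integral {0..t} (\<lambda>s. H (picard_iter H y (Suc k) s) - H (picard_iter H y k s))"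
    using integral_diff[OF integrable_H_picard_iter[of y "Suc k" t] integrable_H_picard_iter[of y k t]]
    by (simp del: picard_iter.simps
        add: picard_iter.simps(2)[of H y "Suc k"] picard_iter.simps(2)[of H y k])
  also have "norm \<dots> \<le> integral {0..t} (\<lambda>s. c * s ^ Suc k)"
    using has_integral_mult_right[OF has_integral_power_0[OF Suc.prems, of "Suc k"], of c] integrand_le
    by (intro integral_norm_bound_integral integrable_diff integrable_H_picard_iter) blast+
  also have "\<dots> = c * (t ^ Suc (Suc k) / real (Suc (Suc k)))"
    using has_integral_mult_right[OF has_integral_power_0[OF Suc.prems, of "Suc k"], of c]
    by (rule integral_unique)
  also have "\<dots> = norm (H y) * L ^ Suc k * t ^ Suc (Suc k) / fact (Suc (Suc k))"
    unfolding c_def by (simp add: field_simps del: of_nat_Suc)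
  finally show ?case .
qed

text \<open>The iterates are the partial sums of a series dominated on [0,T] by the exponential series
  of L T, so the Weierstrass M-test applies.\<close>
lemma picard_iter_uniform_limit:
  "\<exists>x. \<forall>T\<ge>0. uniform_limit {0..T} (picard_iter H y) x sequentially"
proof -
  define f where "f i t = picard_iter H y (Suc i) t - picard_iter H y i t" for i t
  have partial_sum: "picard_iter H y n t = y + (\<Sum>i<n. f i t)" for n t
    by (induction n) (simp_all add: f_def)
  have "uniform_limit {0..T} (picard_iter H y) (\<lambda>t. y + (\<Sum>i. f i t)) sequentially" if "0 \<le> T" for T
  proof -
    define B where "B i = norm (H y) * L^i * T^Suc i / fact (Suc i)" for i
    have L: "0 \<le> L"
      by (rule lipschitz_on_nonneg[OF lipschitz_H])
    have "norm (f i t) \<le> B i" if "t \<in> {0..T}" for i t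
    proof -
      have "norm (f i t) \<le> norm (H y) * L^i * t^Suc i / fact (Suc i)"
        using picard_iter_step_le[of t y i] that unfolding f_def by simp
      also have "\<dots> \<le> B i"
        unfolding B_def using that L by (intro divide_right_mono mult_left_mono power_mono) auto
      finally show ?thesis .
    qed
    moreover have "summable B"
      unfolding B_def using L \<open>0 \<le> T\<close> by (rule summable_picard_bound) simp
    ultimately have "uniform_limit {0..T} (\<lambda>n t. \<Sum>i<n. f i t) (\<lambda>t. \<Sum>i. f i t) sequentially"
      by (rule Weierstrass_m_test)
    then show ?thesis
      unfolding uniform_limit_iff partial_sum by (simp add: dist_norm)
  qed
  then show ?thesis
    by blast
qed

lemma picard_limit_integral_eq:
  assumes lim: "\<And>T. 0 \<le> T \<Longrightarrow> uniform_limit {0..T} (picard_iter H y) x sequentially" and "0 \<le> t"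
  shows "x t = y + integral {0..t} (\<lambda>s. H (x s))"
proof -
  have "uniform_limit {0..t} (\<lambda>n s. H (picard_iter H y n s)) (\<lambda>s. H (x s)) sequentially"
    using uniform_limit_compose[OF lim[OF assms(2)] lipschitz_on_uniformly_continuous[OF lipschitz_H]]
    by (simp add: o_def)
  moreover have "continuous_on {0..t} (\<lambda>s. H (picard_iter H y n s))" for n
    by (rule continuous_on_compose2
        [OF continuous_on_lipschitz_UNIV continuous_on_picard_iter subset_UNIV])
  ultimately obtain I J where I: "\<And>n. ((\<lambda>s. H (picard_iter H y n s)) has_integral I n) {0..t}"
    and J: "((\<lambda>s. H (x s)) has_integral J) {0..t}" and "I \<longlonglongrightarrow> J"
    by (rule uniform_limit_integral) auto
  then have "(\<lambda>n. picard_iter H y (Suc n) t) \<longlonglongrightarrow> y + J"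
    using integral_unique[OF I] by (auto intro: tendsto_add)
  moreover have "(\<lambda>n. picard_iter H y (Suc n) t) \<longlonglongrightarrow> x t"
    using LIMSEQ_Suc[OF tendsto_uniform_limitI[OF lim[OF assms(2)]]] assms(2) by simp
  ultimately show ?thesis
    using LIMSEQ_unique integral_unique[OF J] by metis
qed

lemma lipschitz_ode_solution_exists:
  "\<exists>x. x 0 = y \<and> (\<forall>t\<ge>0. (x has_vector_derivative H (x t)) (at t within {0..}))"
proof -
  obtain x where lim: "\<And>T. 0 \<le> T \<Longrightarrow> uniform_limit {0..T} (picard_iter H y) x sequentially"
    using picard_iter_uniform_limit by blast
  have "continuous_on {0..T} x" if "0 \<le> T" for T
    using continuous_on_picard_iter lim[OF that]
    by (intro uniform_limit_theorem) (auto intro: always_eventually)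
  then have "continuous_on {0..t+1} (\<lambda>s. H (x s))" if "0 \<le> t" for t
    using that by (intro continuous_on_compose2[OF continuous_on_lipschitz_UNIV]) auto
  moreover have "\<And>t. 0 \<le> t \<Longrightarrow> x t = y + integral {0..t} (\<lambda>s. H (x s))"
    using picard_limit_integral_eq lim by blast
  ultimately have "(x has_vector_derivative H (x t)) (at t within {0..})" if "0 \<le> t" for t
    using that by (intro has_vector_derivative_if_integral_eq[of t _ x y]) auto
  moreover have "x 0 = y"
    using picard_limit_integral_eq[OF lim, of 0] by simp
  ultimately show ?thesis
    by blast
qed

end

section \<open>Contraction towards an equilibrium\<close>

lemma continuous_induction_less:
  fixes g :: "real \<Rightarrow> real"
  assumes "continuous_on {0..} g"
    and step: "\<And>t. 0 \<le> t \<Longrightarrow> (\<And>s. 0 \<le> s \<Longrightarrow> s < t \<Longrightarrow> g s < b) \<Longrightarrow> g t < b"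
    and "0 \<le> t"
  shows "g t < b"
proof (rule ccontr)
  assume "\<not> g t < b"
  define S where "S = {t. 0 \<le> t \<and> b \<le> g t}"
  have "S \<noteq> {}" and "bdd_below S"
    using \<open>\<not> g t < b\<close> \<open>0 \<le> t\<close> unfolding S_def by (auto intro: bdd_belowI[of _ 0])
  moreover have "closed S"
  proof -
    have "closed ({0..} \<inter> g -` {b..})"
      using assms(1) by (rule continuous_closed_preimage) auto
    moreover have "{0..} \<inter> g -` {b..} = S"
      unfolding S_def by auto
    ultimately show ?thesis
      by simp
  qed
  ultimately have "Inf S \<in> S"
    by (rule closed_contains_Inf)
  moreover have "g s < b" if "0 \<le> s" "s < Inf S" for s
    using that cInf_lower[OF _ \<open>bdd_below S\<close>, of s] unfolding S_def by force
  ultimately show False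
    using step[of "Inf S"] unfolding S_def by force
qed

lemma dist_le_exp_decay_if_contracting:
  fixes H :: "'a::euclidean_space \<Rightarrow> 'a" and x :: "real \<Rightarrow> 'a"
  assumes sol: "\<And>t. 0 \<le> t \<Longrightarrow> (x has_vector_derivative H (x t)) (at t within {0..})"
    and contract: "\<And>s. 0 < s \<Longrightarrow> s < T \<Longrightarrow> (x s - p) \<bullet> H (x s) \<le> - c * (norm (x s - p))\<^sup>2"
    and "0 \<le> T"
  shows "dist (x T) p \<le> exp (- (c * T)) * dist (x 0) p"
proof -
  define w where "w t = (x t - p) \<bullet> (x t - p)" for t
  define Z where "Z t = exp (2 * c * t) * w t" for t
  have Z_deriv: "(Z has_real_derivative exp (2 * c * t) * (2 * c * w t + 2 * ((x t - p) \<bullet> H (x t))))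
      (at t within {0..})" if "0 \<le> t" for t
  proof -
    have "(x has_derivative (\<lambda>h. h *\<^sub>R H (x t))) (at t within {0..})"
      using sol[OF that] by (simp add: has_vector_derivative_def)
    from has_derivative_diff[OF this has_derivative_const]
    have xpd: "((\<lambda>t. x t - p) has_derivative (\<lambda>h. h *\<^sub>R H (x t))) (at t within {0..})"
      by simp
    have "(w has_derivative (\<lambda>h. (x t - p) \<bullet> (h *\<^sub>R H (x t)) + (h *\<^sub>R H (x t)) \<bullet> (x t - p)))
        (at t within {0..})"
      unfolding w_def by (rule has_derivative_inner[OF xpd xpd])
    then have "(w has_real_derivative 2 * ((x t - p) \<bullet> H (x t))) (at t within {0..})"
      unfolding has_field_derivative_def by (rule has_derivative_eq_rhs) (auto simp: inner_commute)
    then show ?thesis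
      unfolding Z_def by (auto intro!: derivative_eq_intros simp: algebra_simps)
  qed
  have "Z T \<le> Z 0"
  proof (rule DERIV_nonpos_imp_decreasing_open[OF \<open>0 \<le> T\<close>])
    fix s assume s: "0 < s" "s < T"
    have "at s within {0..} = at s"
      using s by (intro at_within_interior) auto
    moreover have "2 * c * w s + 2 * ((x s - p) \<bullet> H (x s)) \<le> 0"
      using contract[OF s] unfolding w_def by (simp add: power2_norm_eq_inner)
    ultimately show "\<exists>y. (Z has_real_derivative y) (at s) \<and> y \<le> 0"
      using Z_deriv[of s] s by (auto intro!: exI mult_nonneg_nonpos)
  next
    have "continuous_on {0..} Z"
      unfolding continuous_on_eq_continuous_within using Z_deriv DERIV_continuous by (metis atLeast_iff)
    then show "continuous_on {0..T} Z"
      by (rule continuous_on_subset) auto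
  qed
  then have "(exp (c * T) * dist (x T) p)\<^sup>2 \<le> (dist (x 0) p)\<^sup>2"
    unfolding Z_def w_def
    by (simp add: dist_norm power2_norm_eq_inner power_mult_distrib exp_double[symmetric] mult.assoc)
  then have "exp (c * T) * dist (x T) p \<le> dist (x 0) p"
    by (rule power2_le_imp_le) simp
  then show ?thesis
    by (simp add: exp_minus field_simps)
qed

lemma dist_le_exp_decay:
  fixes H :: "'a::euclidean_space \<Rightarrow> 'a" and x :: "real \<Rightarrow> 'a"
  assumes sol: "\<And>t. 0 \<le> t \<Longrightarrow> (x has_vector_derivative H (x t)) (at t within {0..})"
    and contract: "\<And>q. dist q p < R \<Longrightarrow> (q - p) \<bullet> H q \<le> - c * (norm (q - p))\<^sup>2"
    and "0 \<le> c" and "dist (x 0) p < R" and "0 \<le> t"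
  shows "dist (x t) p \<le> exp (- (c * t)) * dist (x 0) p"
proof -
  have decay: "dist (x T) p \<le> exp (- (c * T)) * dist (x 0) p"
    if "0 \<le> T" and "\<And>s. 0 \<le> s \<Longrightarrow> s < T \<Longrightarrow> dist (x s) p < R" for T
    using sol contract that by (intro dist_le_exp_decay_if_contracting[of x H T p c]) auto
  have "continuous_on {0..} x"
    unfolding continuous_on_eq_continuous_within
    using sol has_vector_derivative_continuous by (metis atLeast_iff)
  then have "continuous_on {0..} (\<lambda>t. dist (x t) p)"
    by (intro continuous_intros)
  then have "dist (x s) p < R" if "0 \<le> s" for s
  proof (rule continuous_induction_less[OF _ _ that])
    fix T :: real
    assume "0 \<le> T" and "\<And>s. 0 \<le> s \<Longrightarrow> s < T \<Longrightarrow> dist (x s) p < R"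
    then have "dist (x T) p \<le> exp (- (c * T)) * dist (x 0) p"
      by (rule decay)
    also have "\<dots> \<le> dist (x 0) p"
      using \<open>0 \<le> c\<close> \<open>0 \<le> T\<close> by (intro mult_left_le_one_le) auto
    finally show "dist (x T) p < R"
      using \<open>dist (x 0) p < R\<close> by linarith
  qed
  then show ?thesis
    using decay[OF \<open>0 \<le> t\<close>] by blast
qed

lemma exp_neg_mult_tendsto_0:
  fixes c :: real
  assumes "0 < c"
  shows "((\<lambda>t. exp (- (c * t)) * d) \<longlongrightarrow> 0) at_top"
proof -
  have "filterlim (\<lambda>t. c * t) at_top at_top"
    by (rule filterlim_tendsto_pos_mult_at_top[OF tendsto_const assms filterlim_ident])
  then have "((\<lambda>t. inverse (exp (c * t))) \<longlongrightarrow> 0) at_top"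
    by (intro tendsto_inverse_0_at_top filterlim_compose[OF exp_at_top])
  then show ?thesis
    by (intro tendsto_mult_left_zero) (simp add: exp_minus)
qed

lemma is_solution_exists_if_contracting:
  fixes F H :: "real^'n \<Rightarrow> real^'n"
  assumes "0 \<le> c" and contract: "\<And>q. dist q p < r \<Longrightarrow> (q - p) \<bullet> F q \<le> - c * (norm (q - p))\<^sup>2"
    and lipschitz: "L-lipschitz_on UNIV H" and agree: "\<And>q. dist q p < r \<Longrightarrow> H q = F q"
    and "dist y p < r"
  shows "\<exists>x. is_solution F x \<and> x 0 = y"
proof -
  obtain x where "x 0 = y" and x: "\<And>t. 0 \<le> t \<Longrightarrow> (x has_vector_derivative H (x t)) (at t within {0..})"
    using lipschitz_ode_solution_exists[OF lipschitz] by blast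
  have "dist (x t) p < r" if "0 \<le> t" for t
  proof -
    have "dist (x t) p \<le> exp (- (c * t)) * dist y p"
      unfolding \<open>x 0 = y\<close>[symmetric]
      by (rule dist_le_exp_decay[of x H p r c]) (use x agree contract assms(1,5) \<open>x 0 = y\<close> that in auto)
    also have "\<dots> \<le> dist y p"
      using \<open>0 \<le> c\<close> that by (intro mult_left_le_one_le) auto
    finally show ?thesis
      using \<open>dist y p < r\<close> by simp
  qed
  then have "is_solution F x"
    unfolding is_solution_def using x agree by simp
  then show ?thesis
    using \<open>x 0 = y\<close> by blast
qed

text \<open>The globally Lipschitz field H is only needed to produce solutions; by contraction they stay in
  the ball where H agrees with F.\<close>
lemma loc_asym_stable_if_contracting:
  fixes F H :: "real^'n \<Rightarrow> real^'n"
  assumes "F p = 0" and "0 < r" and "0 < c"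
    and contract: "\<And>q. dist q p < r \<Longrightarrow> (q - p) \<bullet> F q \<le> - c * (norm (q - p))\<^sup>2"
    and lipschitz: "L-lipschitz_on UNIV H" and agree: "\<And>q. dist q p < r \<Longrightarrow> H q = F q"
  shows "loc_asym_stable F p"
proof -
  have decay: "dist (x t) p \<le> exp (- (c * t)) * dist (x 0) p"
    if "is_solution F x" and "dist (x 0) p < r" and "0 \<le> t" for x t
    using that contract \<open>0 < c\<close> unfolding is_solution_def
    by (intro dist_le_exp_decay[of x F p r c]) auto
  have stable: "\<exists>\<delta>>0. \<forall>x. is_solution F x \<and> dist (x 0) p < \<delta> \<longrightarrow> (\<forall>t\<ge>0. dist (x t) p < \<epsilon>)"
    if "0 < \<epsilon>" for \<epsilon>
  proof (intro exI[of _ "min \<epsilon> r"] conjI allI impI)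
    show "0 < min \<epsilon> r"
      using that \<open>0 < r\<close> by simp
    fix x and t :: real
    assume x: "is_solution F x \<and> dist (x 0) p < min \<epsilon> r" and "0 \<le> t"
    then have "dist (x t) p \<le> exp (- (c * t)) * dist (x 0) p"
      by (intro decay) auto
    also have "\<dots> \<le> dist (x 0) p"
      using \<open>0 < c\<close> \<open>0 \<le> t\<close> by (intro mult_left_le_one_le) auto
    finally show "dist (x t) p < \<epsilon>"
      using x by linarith
  qed
  have attractive: "(x \<longlongrightarrow> p) at_top" if "is_solution F x" and "dist (x 0) p < r" for x
  proof -
    have "\<forall>\<^sub>F t in at_top. norm (x t - p) \<le> exp (- (c * t)) * dist (x 0) p"
      using eventually_ge_at_top[of 0]
      by (rule eventually_mono) (use decay that in \<open>simp add: dist_norm\<close>)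
    then have "((\<lambda>t. x t - p) \<longlongrightarrow> 0) at_top"
      by (rule Lim_null_comparison) (rule exp_neg_mult_tendsto_0[OF \<open>0 < c\<close>])
    then show ?thesis
      by (simp add: Lim_null[symmetric])
  qed
  have "\<exists>x. is_solution F x \<and> x 0 = y" if "dist y p < r" for y
    using \<open>0 < c\<close> by (intro is_solution_exists_if_contracting[OF _ contract lipschitz agree that]) simp
  then show ?thesis
    unfolding loc_asym_stable_def using \<open>F p = 0\<close> \<open>0 < r\<close> stable attractive by blast
qed

section \<open>The gradient field of the game\<close>

text \<open>For j \<noteq> i one has gamma q j = (1 - q$i) * q$j * \<Prod>k\<notin>{i,j}. (1 - q$k), so the other
  players' throughput is \<Sum>j\<noteq>i. gamma q j = (1 - q$i) * gamma_rest q i, where gamma_rest q i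
  does not depend on q$i.\<close>
definition gamma_rest :: "real^'n \<Rightarrow> 'n \<Rightarrow> real" where
  "gamma_rest q i = (\<Sum>j\<in>UNIV-{i}. q$j * (\<Prod>k\<in>UNIV-{j}-{i}. 1 - q$k))"

definition field_formula :: "real \<Rightarrow> real \<Rightarrow> real \<Rightarrow> real^'n \<Rightarrow> real^'n" where
  "field_formula C A M q =
     (\<chi> i. C / q$i - A / (real CARD('n) - 1) * (alpha q i * gamma_rest q i) - M)"

lemma alpha_upd_same: "alpha (upd q i x) i = alpha q i"
  unfolding alpha_def upd_def by (intro prod.cong) auto

lemma alpha_pos: "(\<And>j. q$j < 1) \<Longrightarrow> 0 < alpha q i"
  unfolding alpha_def by (intro prod_pos) auto

lemma gamma_upd_other:
  assumes "j \<noteq> i"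
  shows "gamma (upd q i x) j = (1 - x) * (q$j * (\<Prod>k\<in>UNIV-{j}-{i}. 1 - q$k))"
proof -
  have "(\<Prod>k\<in>UNIV-{j}. 1 - upd q i x $ k)
      = (1 - upd q i x $ i) * (\<Prod>k\<in>UNIV-{j}-{i}. 1 - upd q i x $ k)"
    using assms by (intro prod.remove) auto
  also have "(\<Prod>k\<in>UNIV-{j}-{i}. 1 - upd q i x $ k) = (\<Prod>k\<in>UNIV-{j}-{i}. 1 - q $ k)"
    by (intro prod.cong) (auto simp: upd_def)
  finally show ?thesis
    using assms unfolding gamma_def by (simp add: upd_def)
qed

lemma V_upd_eq:
  fixes q :: "real^'n"
  shows "V C A M (upd q i x) i =
     C * ln (x * alpha q i) + A * alpha q i * (1 / (real CARD('n) - 1) * ((1 - x) * gamma_rest q i))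
       - M * x"
proof -
  have "gamma (upd q i x) i = x * alpha q i"
    using alpha_upd_same[of q i x] unfolding gamma_def alpha_def by (simp add: upd_def)
  moreover have "(\<Sum>j\<in>UNIV-{i}. gamma (upd q i x) j) = (1 - x) * gamma_rest q i"
    unfolding gamma_rest_def sum_distrib_left by (intro sum.cong) (auto simp: gamma_upd_other)
  ultimately show ?thesis
    unfolding V_def gamma_bar_def alpha_upd_same by (simp add: upd_def)
qed

lemma V_upd_has_real_derivative:
  fixes q :: "real^'n"
  assumes "0 < x" and "0 < alpha q i"
  shows "((\<lambda>x. V C A M (upd q i x) i) has_real_derivative
           C / x - A / (real CARD('n) - 1) * (alpha q i * gamma_rest q i) - M) (at x)"
proof -
  define K where "K = 1 / (real CARD('n) - 1)"
  have "((\<lambda>x. C * ln (x * alpha q i) + A * alpha q i * (K * ((1 - x) * gamma_rest q i)) - M * x)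
     has_real_derivative C * (alpha q i / (x * alpha q i))
       + A * alpha q i * (K * ((0 - 1) * gamma_rest q i)) - M * 1) (at x)"
    using assms by (auto intro!: derivative_eq_intros)
  moreover have "alpha q i / (x * alpha q i) = 1 / x"
    using assms by simp
  ultimately show ?thesis
    unfolding V_upd_eq K_def[symmetric] by (simp add: K_def algebra_simps)
qed

lemma field_eq_field_formula:
  assumes "\<And>j. 0 < q$j \<and> q$j < 1"
  shows "field C A M q = field_formula C A M q"
  using assms
  by (simp add: vec_eq_iff field_def field_formula_def
      DERIV_imp_deriv[OF V_upd_has_real_derivative] alpha_pos)

lemma field_formula_eq_0_if_nash:
  assumes "nash C A M p"
  shows "field_formula C A M p = 0"
proof (subst vec_eq_iff, intro allI)
  fix i
  have p: "0 < p$k \<and> p$k < 1" for k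
    using assms unfolding nash_def by auto
  define d where "d = min (p$i) (1 - p$i)"
  have "0 < d"
    unfolding d_def using p[of i] by simp
  moreover have "((\<lambda>x. V C A M (upd p i x) i) has_real_derivative field_formula C A M p $ i) (at (p$i))"
    using V_upd_has_real_derivative[of "p$i" p i] alpha_pos[of p i] p
    by (simp add: field_formula_def)
  moreover have "upd p i (p$i) = p"
    unfolding upd_def by (simp add: vec_eq_iff)
  moreover have "V C A M (upd p i y) i \<le> V C A M p i" if "\<bar>p$i - y\<bar> < d" for y
  proof -
    have "0 < y" "y < 1"
      using that unfolding d_def by auto
    then show ?thesis
      using assms unfolding nash_def by blast
  qed
  ultimately show "field_formula C A M p $ i = 0 $ i"
    using DERIV_local_max by (metis zero_index)
qed

lemma gamma_rest_term_eq_prod: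
  fixes q :: "real^'n"
  assumes "j \<noteq> i"
  shows "q$j * (\<Prod>k\<in>UNIV-{j}-{i}. 1 - q$k) = (\<Prod>k\<in>UNIV-{i}. if k = j then q$k else 1 - q$k)"
proof -
  have "(\<Prod>k\<in>UNIV-{i}. if k = j then q$k else 1 - q$k)
      = q$j * (\<Prod>k\<in>UNIV-{i}-{j}. if k = j then q$k else 1 - q$k)"
    using assms by (subst prod.remove[of _ j]) auto
  also have "(\<Prod>k\<in>UNIV-{i}-{j}. if k = j then q$k else 1 - q$k) = (\<Prod>k\<in>UNIV-{j}-{i}. 1 - q$k)"
    by (intro prod.cong) auto
  finally show ?thesis
    by simp
qed

lemma alpha_bounds: "(\<And>k. q$k \<in> {0..1}) \<Longrightarrow> 0 \<le> alpha q i \<and> alpha q i \<le> 1"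
  unfolding alpha_def by (auto intro: prod_nonneg prod_le_1)

lemma alpha_diff_abs_le:
  assumes "\<And>k. q$k \<in> {0..1}" and "\<And>k. q'$k \<in> {0..1}"
  shows "\<bar>alpha q i - alpha q' i\<bar> \<le> (\<Sum>k\<in>UNIV-{i}. \<bar>q$k - q'$k\<bar>)"
proof -
  have "\<bar>alpha q i - alpha q' i\<bar> \<le> (\<Sum>k\<in>UNIV-{i}. \<bar>(1 - q$k) - (1 - q'$k)\<bar>)"
    unfolding alpha_def using assms by (intro prod_diff_abs_le) auto
  then show ?thesis
    by (simp add: abs_minus_commute)
qed

lemma gamma_rest_term_bounds:
  fixes q :: "real^'n"
  assumes "\<And>k. q$k \<in> {0..1}" and "j \<noteq> i"
  shows "0 \<le> q$j * (\<Prod>k\<in>UNIV-{j}-{i}. 1 - q$k) \<and> q$j * (\<Prod>k\<in>UNIV-{j}-{i}. 1 - q$k) \<le> 1"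
proof -
  have "0 \<le> (if k = j then q$k else 1 - q$k) \<and> (if k = j then q$k else 1 - q$k) \<le> 1" for k
    using assms(1)[of k] by auto
  then show ?thesis
    unfolding gamma_rest_term_eq_prod[OF assms(2)] by (auto intro: prod_nonneg prod_le_1)
qed

lemma gamma_rest_term_diff_abs_le:
  fixes q q' :: "real^'n"
  assumes "\<And>k. q$k \<in> {0..1}" and "\<And>k. q'$k \<in> {0..1}" and "j \<noteq> i"
  shows "\<bar>q$j * (\<Prod>k\<in>UNIV-{j}-{i}. 1 - q$k) - q'$j * (\<Prod>k\<in>UNIV-{j}-{i}. 1 - q'$k)\<bar>
           \<le> (\<Sum>k\<in>UNIV-{i}. \<bar>q$k - q'$k\<bar>)"
proof -
  have "\<bar>q$j * (\<Prod>k\<in>UNIV-{j}-{i}. 1 - q$k) - q'$j * (\<Prod>k\<in>UNIV-{j}-{i}. 1 - q'$k)\<bar>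
      \<le> (\<Sum>k\<in>UNIV-{i}. \<bar>(if k = j then q$k else 1 - q$k) - (if k = j then q'$k else 1 - q'$k)\<bar>)"
    unfolding gamma_rest_term_eq_prod[OF assms(3)] by (rule prod_diff_abs_le) (use assms(1,2) in auto)
  also have "\<dots> = (\<Sum>k\<in>UNIV-{i}. \<bar>q$k - q'$k\<bar>)"
    by (intro sum.cong) (auto simp: abs_minus_commute)
  finally show ?thesis .
qed

lemma gamma_rest_bounds:
  fixes q :: "real^'n"
  assumes "\<And>k. q$k \<in> {0..1}"
  shows "0 \<le> gamma_rest q i \<and> gamma_rest q i \<le> real CARD('n) - 1"
proof -
  have "gamma_rest q i \<le> real (card (UNIV - {i})) * 1"
    unfolding gamma_rest_def using gamma_rest_term_bounds[OF assms] by (intro sum_bounded_above) auto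
  moreover have "0 \<le> gamma_rest q i"
    unfolding gamma_rest_def using gamma_rest_term_bounds[OF assms] by (intro sum_nonneg) auto
  ultimately show ?thesis
    by (simp add: real_card_UNIV_Diff_singleton)
qed

lemma gamma_rest_diff_abs_le:
  fixes q q' :: "real^'n"
  assumes "\<And>k. q$k \<in> {0..1}" and "\<And>k. q'$k \<in> {0..1}"
  shows "\<bar>gamma_rest q i - gamma_rest q' i\<bar> \<le> (real CARD('n) - 1) * (\<Sum>k\<in>UNIV-{i}. \<bar>q$k - q'$k\<bar>)"
proof -
  have "\<bar>gamma_rest q i - gamma_rest q' i\<bar>
      \<le> (\<Sum>j\<in>UNIV-{i}. \<bar>q$j * (\<Prod>k\<in>UNIV-{j}-{i}. 1 - q$k) - q'$j * (\<Prod>k\<in>UNIV-{j}-{i}. 1 - q'$k)\<bar>)"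
    unfolding gamma_rest_def sum_subtractf[symmetric] by (rule sum_abs)
  also have "\<dots> \<le> real (card (UNIV - {i})) * (\<Sum>k\<in>UNIV-{i}. \<bar>q$k - q'$k\<bar>)"
    using gamma_rest_term_diff_abs_le[OF assms] by (intro sum_bounded_above) auto
  finally show ?thesis
    by (simp add: real_card_UNIV_Diff_singleton)
qed

lemma alpha_gamma_rest_diff_abs_le:
  fixes q q' :: "real^'n"
  assumes "\<And>k. q$k \<in> {0..1}" and "\<And>k. q'$k \<in> {0..1}"
  shows "\<bar>alpha q i * gamma_rest q i - alpha q' i * gamma_rest q' i\<bar>
           \<le> 2 * (real CARD('n) - 1) * (\<Sum>k\<in>UNIV-{i}. \<bar>q$k - q'$k\<bar>)"
proof -
  define s where "s = (\<Sum>k\<in>UNIV-{i}. \<bar>q$k - q'$k\<bar>)"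
  have "\<bar>alpha q i * gamma_rest q i - alpha q' i * gamma_rest q' i\<bar>
      \<le> \<bar>alpha q i - alpha q' i\<bar> * \<bar>gamma_rest q i\<bar> + \<bar>alpha q' i\<bar> * \<bar>gamma_rest q i - gamma_rest q' i\<bar>"
    by (rule abs_mult_diff_le)
  also have "\<dots> \<le> s * (real CARD('n) - 1) + 1 * ((real CARD('n) - 1) * s)"
    using alpha_diff_abs_le[OF assms, of i] alpha_bounds[OF assms(2), of i]
      gamma_rest_bounds[OF assms(1), of i] gamma_rest_diff_abs_le[OF assms, of i]
    unfolding s_def by (intro add_mono mult_mono) auto
  finally show ?thesis
    unfolding s_def by (simp add: algebra_simps)
qed

lemma inner_field_formula_diff_le:
  fixes p q :: "real^'n"
  assumes "CARD('n) \<ge> 2" and "C \<ge> 0" and "A \<ge> 0"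
    and p: "\<And>k. p$k \<in> {0<..1}" and q: "\<And>k. q$k \<in> {0<..1}"
  shows "(q - p) \<bullet> (field_formula C A M q - field_formula C A M p)
           \<le> - (C - 2 * (real CARD('n) - 1) * A) * (norm (q - p))\<^sup>2"
proof -
  define N where "N = real CARD('n)"
  have N: "N > 1"
    unfolding N_def using assms(1) by simp
  define u where "u k = q$k - p$k" for k
  define s where "s i = (\<Sum>k\<in>UNIV-{i}. \<bar>u k\<bar>)" for i
  have coordinate: "u i * (field_formula C A M q $ i - field_formula C A M p $ i)
      \<le> - C * (u i)\<^sup>2 + 2 * A * \<bar>u i\<bar> * s i" for i
  proof -
    define d where "d = alpha q i * gamma_rest q i - alpha p i * gamma_rest p i"
    have "\<bar>d\<bar> \<le> 2 * (N - 1) * s i"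
      unfolding d_def N_def s_def u_def using p q
      by (intro alpha_gamma_rest_diff_abs_le) (auto simp: less_imp_le)
    have K: "A / (N - 1) \<ge> 0"
      using assms(3) N by simp
    have "- (A / (N - 1) * (u i * d)) \<le> \<bar>A / (N - 1) * (u i * d)\<bar>"
      by (rule abs_ge_minus_self)
    also have "\<dots> = A / (N - 1) * (\<bar>u i\<bar> * \<bar>d\<bar>)"
      using K by (simp only: abs_mult abs_of_nonneg)
    also have "\<dots> \<le> A / (N - 1) * (\<bar>u i\<bar> * (2 * (N - 1) * s i))"
      using \<open>\<bar>d\<bar> \<le> _\<close> K by (intro mult_left_mono) auto
    finally have "- (A / (N - 1) * (u i * d)) \<le> \<dots>" .
    moreover have "u i * (C / q$i - C / p$i) \<le> - C * (u i)\<^sup>2"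
      unfolding u_def using p[of i] q[of i] assms(2) by (intro inverse_diff_mult_le) auto
    moreover have "u i * (field_formula C A M q $ i - field_formula C A M p $ i)
        = u i * (C / q$i - C / p$i) - A / (N - 1) * (u i * d)"
      unfolding field_formula_def d_def N_def by (simp add: algebra_simps)
    moreover have "A / (N - 1) * (\<bar>u i\<bar> * (2 * (N - 1) * s i)) = 2 * A * \<bar>u i\<bar> * s i"
      using N by (simp add: field_simps)
    ultimately show ?thesis
      by linarith
  qed
  have "(q - p) \<bullet> (field_formula C A M q - field_formula C A M p)
      = (\<Sum>i\<in>UNIV. u i * (field_formula C A M q $ i - field_formula C A M p $ i))"
    unfolding inner_vec_def u_def by simp
  also have "\<dots> \<le> (\<Sum>i\<in>UNIV. - C * (u i)\<^sup>2 + 2 * A * \<bar>u i\<bar> * s i)"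
    by (intro sum_mono coordinate)
  also have "\<dots> = - C * (\<Sum>i\<in>UNIV. (u i)\<^sup>2) + 2 * A * (\<Sum>i\<in>UNIV. \<bar>u i\<bar> * s i)"
    by (simp only: sum.distrib mult.assoc sum_distrib_left[symmetric])
  also have "\<dots> \<le> - C * (\<Sum>i\<in>UNIV. (u i)\<^sup>2) + 2 * A * ((N - 1) * (\<Sum>i\<in>UNIV. (u i)\<^sup>2))"
    using sum_abs_mult_sum_others_le[of u] assms(3) unfolding s_def N_def
    by (intro add_left_mono mult_left_mono) auto
  also have "(\<Sum>i\<in>UNIV. (u i)\<^sup>2) = (norm (q - p))\<^sup>2"
    unfolding power2_norm_eq_inner inner_vec_def u_def by (simp add: power2_eq_square)
  finally show ?thesis
    unfolding N_def by (simp add: algebra_simps)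
qed

section \<open>A globally Lipschitz extension of the field\<close>

definition clamp :: "real \<Rightarrow> real \<Rightarrow> real^'n \<Rightarrow> real^'n" where
  "clamp lo hi q = (\<chi> i. max lo (min hi (q$i)))"

lemma lipschitz_on_clamp: "1-lipschitz_on UNIV (clamp lo hi)"
proof (rule lipschitz_onI)
  fix a b :: "real^'n"
  have "norm (clamp lo hi a - clamp lo hi b) \<le> norm (a - b)"
    by (rule norm_le_componentwise_cart) (auto simp: clamp_def max_def min_def abs_if)
  then show "dist (clamp lo hi a) (clamp lo hi b) \<le> 1 * dist a b"
    by (simp add: dist_norm)
qed simp

lemma clamp_eq_self: "(\<And>k. q$k \<in> {lo..hi}) \<Longrightarrow> clamp lo hi q = q"
  by (simp add: clamp_def vec_eq_iff)

lemma sum_others_abs_diff_le_norm: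
  fixes a b :: "real^'n"
  shows "(\<Sum>k\<in>UNIV-{i}. \<bar>a$k - b$k\<bar>) \<le> (real CARD('n) - 1) * norm (a - b)"
proof -
  have "(\<Sum>k\<in>UNIV-{i}. \<bar>a$k - b$k\<bar>) \<le> real (card (UNIV - {i})) * norm (a - b)"
    using component_le_norm_cart[of "a - b"] by (intro sum_bounded_above) auto
  then show ?thesis
    by (simp add: real_card_UNIV_Diff_singleton)
qed

lemma field_formula_component_diff_le:
  fixes a b :: "real^'n"
  assumes "0 < lo" "hi \<le> 1" "A \<ge> 0" "CARD('n) \<ge> 2"
    and a: "\<And>k. a$k \<in> {lo..hi}" and b: "\<And>k. b$k \<in> {lo..hi}"
  shows "\<bar>field_formula C A M a $ i - field_formula C A M b $ i\<bar>
           \<le> (\<bar>C\<bar> / lo\<^sup>2 + 2 * A * (real CARD('n) - 1)) * norm (a - b)"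
proof -
  define N where "N = real CARD('n)"
  have N: "N > 1"
    unfolding N_def using assms(4) by simp
  define d where "d = alpha a i * gamma_rest a i - alpha b i * gamma_rest b i"
  have ab01: "a$k \<in> {0..1}" "b$k \<in> {0..1}" for k
    using a[of k] b[of k] assms(1,2) by auto
  have "\<bar>C / a$i - C / b$i\<bar> \<le> \<bar>C\<bar> / lo\<^sup>2 * \<bar>a$i - b$i\<bar>"
    using a[of i] b[of i] assms(1) by (intro inverse_diff_abs_le) auto
  also have "\<dots> \<le> \<bar>C\<bar> / lo\<^sup>2 * norm (a - b)"
    using component_le_norm_cart[of "a - b" i] by (intro mult_left_mono) auto
  finally have inverse_part: "\<bar>C / a$i - C / b$i\<bar> \<le> \<bar>C\<bar> / lo\<^sup>2 * norm (a - b)" .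
  have "\<bar>d\<bar> \<le> 2 * (N - 1) * ((N - 1) * norm (a - b))"
    using alpha_gamma_rest_diff_abs_le[OF ab01, of i] sum_others_abs_diff_le_norm[of a b i] N
    unfolding d_def N_def by (smt (verit) mult_left_mono)
  then have "A / (N - 1) * \<bar>d\<bar> \<le> A / (N - 1) * (2 * (N - 1) * ((N - 1) * norm (a - b)))"
    using assms(3) N by (intro mult_left_mono) auto
  also have "\<dots> = 2 * A * (N - 1) * norm (a - b)"
    using N by (simp add: field_simps)
  finally have interaction_part: "A / (N - 1) * \<bar>d\<bar> \<le> 2 * A * (N - 1) * norm (a - b)" .
  have "field_formula C A M a $ i - field_formula C A M b $ i = (C / a$i - C / b$i) - A / (N - 1) * d"
    unfolding field_formula_def d_def N_def by (simp add: algebra_simps)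
  then have "\<bar>field_formula C A M a $ i - field_formula C A M b $ i\<bar>
      \<le> \<bar>C / a$i - C / b$i\<bar> + \<bar>A / (N - 1)\<bar> * \<bar>d\<bar>"
    by (metis abs_mult abs_triangle_ineq4)
  also have "\<bar>A / (N - 1)\<bar> = A / (N - 1)"
    using assms(3) N by simp
  also have "\<bar>C / a$i - C / b$i\<bar> + A / (N - 1) * \<bar>d\<bar>
      \<le> \<bar>C\<bar> / lo\<^sup>2 * norm (a - b) + 2 * A * (N - 1) * norm (a - b)"
    using inverse_part interaction_part by (rule add_mono)
  finally show ?thesis
    unfolding N_def by (simp add: algebra_simps)
qed

lemma field_formula_lipschitz_on_cube:
  fixes C A M lo hi :: real
  assumes "0 < lo" "hi \<le> 1" "A \<ge> 0" "CARD('n) \<ge> 2"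
  shows "\<exists>L. L-lipschitz_on {q :: real^'n. \<forall>k. q$k \<in> {lo..hi}} (field_formula C A M)"
proof -
  define K where "K = \<bar>C\<bar> / lo\<^sup>2 + 2 * A * (real CARD('n) - 1)"
  have "K \<ge> 0"
    unfolding K_def using assms(3,4) by simp
  have "norm (field_formula C A M a - field_formula C A M b) \<le> (real CARD('n) * K) * norm (a - b)"
    if "a \<in> {q. \<forall>k. q$k \<in> {lo..hi}}" "b \<in> {q. \<forall>k. q$k \<in> {lo..hi}}" for a b :: "real^'n"
  proof -
    have "norm (field_formula C A M a - field_formula C A M b)
        \<le> (\<Sum>i\<in>UNIV. \<bar>(field_formula C A M a - field_formula C A M b) $ i\<bar>)"
      by (rule norm_le_l1_cart)
    also have "\<dots> \<le> real CARD('n) * (K * norm (a - b))"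
      using field_formula_component_diff_le[OF assms] that unfolding K_def
      by (intro sum_bounded_above[where A = UNIV, simplified]) auto
    finally show ?thesis
      by (simp add: mult.assoc)
  qed
  then show ?thesis
    using \<open>K \<ge> 0\<close> by (intro exI[of _ "real CARD('n) * K"] lipschitz_onI) (auto simp: dist_norm)
qed

lemma lipschitz_field_formula_clamp:
  fixes C A M lo hi :: real
  assumes "0 < lo" "lo \<le> hi" "hi \<le> 1" "A \<ge> 0" "CARD('n) \<ge> 2"
  shows "\<exists>L. L-lipschitz_on UNIV (\<lambda>q :: real^'n. field_formula C A M (clamp lo hi q))"
proof -
  obtain L where L: "L-lipschitz_on {q :: real^'n. \<forall>k. q$k \<in> {lo..hi}} (field_formula C A M)"
    using field_formula_lipschitz_on_cube[OF assms(1,3,4,5)] by blast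
  have "range (clamp lo hi) \<subseteq> {q :: real^'n. \<forall>k. q$k \<in> {lo..hi}}"
    using \<open>lo \<le> hi\<close> by (auto simp: clamp_def)
  then show ?thesis
    using lipschitz_on_compose2[OF lipschitz_on_clamp lipschitz_on_subset[OF L]] by blast
qed

lemma inner_field_le_if_nash:
  fixes p q :: "real^'n"
  assumes "CARD('n) \<ge> 2" and "C \<ge> 0" and "A \<ge> 0" and "nash C A M p" and q: "\<And>k. q$k \<in> {0<..<1}"
  shows "(q - p) \<bullet> field C A M q \<le> - (C - 2 * (real CARD('n) - 1) * A) * (norm (q - p))\<^sup>2"
proof -
  have p: "p$k \<in> {0<..<1}" for k
    using assms(4) unfolding nash_def by auto
  have "(q - p) \<bullet> (field_formula C A M q - field_formula C A M p)
      \<le> - (C - 2 * (real CARD('n) - 1) * A) * (norm (q - p))\<^sup>2"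
    using p q by (intro inner_field_formula_diff_le assms(1-3)) (auto simp: less_imp_le)
  then show ?thesis
    using field_formula_eq_0_if_nash[OF assms(4)] field_eq_field_formula[of q] q by simp
qed

theorem proposition2:
  fixes C A M qs :: real
  assumes "CARD('n::finite) \<ge> 2"
    and "C > 0" and "M > 0" and "A \<ge> 0"
    and "0 < qs" and "qs < 1"
    and "nash C A M (\<chi> i::'n. qs)"
    and "C > 2 * (real CARD('n) - 1) * A"
  shows "loc_asym_stable (field C A M) (\<chi> i::'n. qs)"
proof -
  define p :: "real^'n" where "p = (\<chi> i. qs)"
  define r where "r = min qs (1 - qs) / 2"
  have "0 < r" and "0 < qs - r" and "qs - r \<le> qs + r" and "qs + r < 1"
    unfolding r_def using assms(5,6) by (auto simp: min_def field_simps)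
  have cube: "q$k \<in> {qs - r..qs + r}" if "dist q p < r" for q k
    using component_le_norm_cart[of "q - p" k] that unfolding p_def dist_norm by auto
  have interior: "q$k \<in> {0<..<1}" if "dist q p < r" for q k
    using cube[OF that, of k] \<open>0 < qs - r\<close> \<open>qs + r < 1\<close> by auto
  obtain L
    where lipschitz: "L-lipschitz_on UNIV (\<lambda>q :: real^'n. field_formula C A M (clamp (qs - r) (qs + r) q))"
    using lipschitz_field_formula_clamp[OF \<open>0 < qs - r\<close> \<open>qs - r \<le> qs + r\<close> _ assms(4,1)] \<open>qs + r < 1\<close>
    by (metis less_imp_le)
  have agree: "field_formula C A M (clamp (qs - r) (qs + r) q) = field C A M q" if "dist q p < r" for q
    using cube[OF that] interior[OF that] by (simp add: clamp_eq_self field_eq_field_formula)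
  have equilibrium: "field C A M p = 0"
    using field_eq_field_formula[of p C A M] field_formula_eq_0_if_nash[OF assms(7)] assms(5,6)
    unfolding p_def by simp
  have contract: "(q - p) \<bullet> field C A M q \<le> - (C - 2 * (real CARD('n) - 1) * A) * (norm (q - p))\<^sup>2"
    if "dist q p < r" for q
    using interior[OF that] assms(1,2,4,7) unfolding p_def by (intro inner_field_le_if_nash) auto
  have "0 < C - 2 * (real CARD('n) - 1) * A"
    using assms(8) by simp
  from loc_asym_stable_if_contracting[OF equilibrium \<open>0 < r\<close> this contract lipschitz agree]
  show ?thesis
    unfolding p_def .
qed

end
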